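(* Let $n,\Delta>0$ be integers and $\mu,\eta$ positive reals. Let $V$ be a set of size $n$ and $\mathcal{B}\subseteq\binom{V}{\Delta}$ a family of $\Delta$-sets with $|\mathcal{B}|\le\mu n^\Delta$. Then at most $(\Delta!/\eta^{\Delta-1})\mu n$ vertices of $V$ are $\eta n$-corrupted by $\mathcal{B}$.
   Context: For $\mathcal{B}\subseteq\binom{V}{\Delta}$ and a real $x>0$: every $B\in\mathcal{B}$ is called $x$-corrupted by $\mathcal{B}$; recursively, for $i=\Delta-1,\Delta-2,\dots,1$, an $i$-set $B\subseteq V$ is $x$-corrupted by $\mathcal{B}$ if it is contained in more than $x$ of the $(i+1)$-sets that are $x$-corrupted by $\mathcal{B}$. A vertex $v$ is $x$-corrupted if the $1$-set $\{v\}$ is. *)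

theory Defs
  imports Complex_Main
begin

text \<open>corr_sets V B x D j is the family of (D - j)-subsets of V that are x-corrupted by B
  (for j < D).\<close>
fun corr_sets :: "'a set \<Rightarrow> 'a set set \<Rightarrow> real \<Rightarrow> nat \<Rightarrow> nat \<Rightarrow> 'a set set" where
  "corr_sets V B x D 0 = B"
| "corr_sets V B x D (Suc j) =
     {S. S \<subseteq> V \<and> card S = D - Suc j \<and>
         x < real (card {T \<in> corr_sets V B x D j. S \<subseteq> T})}"

definition corrupted_vertex :: "'a set \<Rightarrow> 'a set set \<Rightarrow> real \<Rightarrow> nat \<Rightarrow> 'a \<Rightarrow> bool" where
  "corrupted_vertex V B x D v \<longleftrightarrow> {v} \<in> corr_sets V B x D (D - 1)"

end

theory Submission
  imports Defs
begin

text \<open>Double counting the pairs (S, T) with S \<subseteq> T between consecutive levels shows that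
  passing from one level of corrupted sets to the next multiplies the size by at most
  (size of the larger sets) / x. Iterating from the \<Delta>-sets down to the singletons gives
  at most \<Delta>! |\<B>| / x^(\<Delta>-1) corrupted vertices; now use |\<B>| \<le> \<mu> n^\<Delta> and x = \<eta> n.\<close>

lemma card_codim1_subsets_le:
  assumes "finite T" and "card T = Suc k" and "\<And>S. S \<in> G \<Longrightarrow> card S = k"
  shows "card {S \<in> G. S \<subseteq> T} \<le> Suc k"
proof -
  have "card {S \<in> G. S \<subseteq> T} \<le> card {S. S \<subseteq> T \<and> card S = k}"
    by (rule card_mono) (use assms in auto)
  also have "\<dots> = Suc k"
    using assms(1,2) by (simp add: n_subsets)
  finally show ?thesis .
qed

lemma card_heavy_subsets_le:
  fixes F G :: "'a set set" and x :: real
  assumes "finite F" and "finite G"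
    and "\<And>T. T \<in> F \<Longrightarrow> finite T \<and> card T = Suc k"
    and "\<And>S. S \<in> G \<Longrightarrow> card S = k \<and> x < real (card {T \<in> F. S \<subseteq> T})"
  shows "x * real (card G) \<le> real (Suc k) * real (card F)"
proof -
  have "x * real (card G) = (\<Sum>S\<in>G. x)"
    by simp
  also have "\<dots> \<le> (\<Sum>S\<in>G. real (card {T \<in> F. S \<subseteq> T}))"
    by (rule sum_mono) (use assms(4) in force)
  also have "\<dots> = (\<Sum>S\<in>G. \<Sum>T\<in>F. if S \<subseteq> T then 1 else 0)"
    using assms(1) by (simp add: sum.If_cases Int_def)
  also have "\<dots> = (\<Sum>T\<in>F. \<Sum>S\<in>G. if S \<subseteq> T then 1 else 0)"
    by (rule sum.swap)
  also have "\<dots> = (\<Sum>T\<in>F. real (card {S \<in> G. S \<subseteq> T}))"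
    using assms(2) by (simp add: sum.If_cases Int_def)
  also have "\<dots> \<le> (\<Sum>T\<in>F. real (Suc k))"
    using assms(3,4) card_codim1_subsets_le[of _ k G]
    by (intro sum_mono) (simp only: of_nat_le_iff)
  finally show ?thesis
    by (simp add: mult.commute)
qed

context
  fixes V :: "'a set" and B :: "'a set set" and x :: real and D :: nat
  assumes finite_V: "finite V" and B_subsets: "B \<subseteq> {S. S \<subseteq> V \<and> card S = D}"
begin

lemma corr_sets_subsets: "S \<in> corr_sets V B x D j \<Longrightarrow> S \<subseteq> V \<and> card S = D - j"
  using B_subsets by (cases j) auto

lemma finite_corr_sets: "finite (corr_sets V B x D j)"
proof (rule finite_subset)
  show "corr_sets V B x D j \<subseteq> Pow V"
    using corr_sets_subsets by blast
qed (use finite_V in simp)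

lemma card_corr_sets_le:
  assumes "x > 0" and "j < D"
  shows "x ^ j * fact (D - j) * real (card (corr_sets V B x D j)) \<le> fact D * real (card B)"
  using assms(2)
proof (induction j)
  case 0
  then show ?case by simp
next
  case (Suc j)
  let ?L = "corr_sets V B x D"
  have D_j: "D - j = Suc (D - Suc j)"
    using Suc.prems by simp
  have "x * real (card (?L (Suc j))) \<le> real (D - j) * real (card (?L j))"
    unfolding D_j
  proof (rule card_heavy_subsets_le[OF finite_corr_sets finite_corr_sets])
    fix T assume "T \<in> ?L j"
    then have "T \<subseteq> V" and "card T = D - j"
      using corr_sets_subsets by blast+
    then show "finite T \<and> card T = Suc (D - Suc j)"
      using finite_V D_j by (auto intro: finite_subset)
  qed simp
  then have "x ^ Suc j * fact (D - Suc j) * real (card (?L (Suc j)))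
      \<le> x ^ j * fact (D - Suc j) * (real (D - j) * real (card (?L j)))"
    using assms(1) by (simp add: mult.assoc mult_left_mono)
  also have "\<dots> = x ^ j * fact (D - j) * real (card (?L j))"
    unfolding D_j by simp
  also have "\<dots> \<le> fact D * real (card B)"
    using Suc by simp
  finally show ?case .
qed

lemma card_corrupted_vertices_le:
  assumes "x > 0" and "D > 0"
  shows "x ^ (D - 1) * real (card {v \<in> V. corrupted_vertex V B x D v}) \<le> fact D * real (card B)"
proof -
  let ?L = "corr_sets V B x D (D - 1)"
  have "{v \<in> V. corrupted_vertex V B x D v} \<subseteq> the_elem ` ?L"
    unfolding corrupted_vertex_def by (auto intro: rev_image_eqI)
  then have "card {v \<in> V. corrupted_vertex V B x D v} \<le> card (the_elem ` ?L)"
    by (rule card_mono[OF finite_imageI[OF finite_corr_sets]])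
  also have "\<dots> \<le> card ?L"
    by (rule card_image_le[OF finite_corr_sets])
  finally have "x ^ (D - 1) * real (card {v \<in> V. corrupted_vertex V B x D v})
      \<le> x ^ (D - 1) * fact (D - (D - 1)) * real (card ?L)"
    using assms(1,2) by (simp add: mult_left_mono)
  also have "\<dots> \<le> fact D * real (card B)"
    by (rule card_corr_sets_le[OF assms(1)]) (use assms(2) in simp)
  finally show ?thesis .
qed

end

theorem lemma11p7:
  fixes V :: "'a set" and B :: "'a set set" and n \<Delta> :: nat and \<mu> \<eta> :: real
  assumes "finite V" and "card V = n" and "n > 0" and "\<Delta> > 0"
    and "\<mu> > 0" and "\<eta> > 0"
    and "B \<subseteq> {S. S \<subseteq> V \<and> card S = \<Delta>}"
    and "real (card B) \<le> \<mu> * real n ^ \<Delta>"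
  shows "real (card {v \<in> V. corrupted_vertex V B (\<eta> * real n) \<Delta> v})
           \<le> (fact \<Delta> / \<eta> ^ (\<Delta> - 1)) * \<mu> * real n"
proof -
  let ?C = "real (card {v \<in> V. corrupted_vertex V B (\<eta> * real n) \<Delta> v})"
  have pos: "(\<eta> * real n) ^ (\<Delta> - 1) > 0"
    using assms(3,6) by simp
  have n_pow: "real n ^ \<Delta> = real n ^ (\<Delta> - 1) * real n"
    using assms(4) by (simp add: power_eq_if)
  have "(\<eta> * real n) ^ (\<Delta> - 1) * ?C \<le> fact \<Delta> * real (card B)"
    using card_corrupted_vertices_le[OF assms(1,7)] assms(3,4,6) by simp
  also have "\<dots> \<le> fact \<Delta> * (\<mu> * real n ^ \<Delta>)"
    using assms(8) by (simp add: mult_left_mono)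
  also have "\<dots> = (\<eta> * real n) ^ (\<Delta> - 1) * ((fact \<Delta> / \<eta> ^ (\<Delta> - 1)) * \<mu> * real n)"
    using assms(6) by (simp add: n_pow power_mult_distrib)
  finally show ?thesis
    using pos by (simp only: mult_le_cancel_left_pos)
qed

end
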